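(* Let $\Sigma$ be a set of identities (equalities between terms) of a fixed finite algebraic type such that the variety of all algebras of that type satisfying $\Sigma$ is locally finite. Then the pseudovariety $\mathsf V$ of all finite algebras satisfying $\Sigma$ is strong.
   Context: A pseudovariety is a nonempty class of finite algebras of a fixed finite type closed under homomorphic images, subalgebras and finite direct products. A variety is locally finite if its finitely generated algebras are finite. For a pseudovariety $\mathsf U$ and finite set $A$, $\Omega_A\mathsf U$ is the free pro-$\mathsf U$ algebra on $A$ (inverse limit of the $A$-generated members of $\mathsf U$; every map from $A$ into a pro-$\mathsf U$ algebra extends uniquely to a continuous homomorphism). A $\mathsf U$-pseudoidentity is $u=v$ with $u,v\in\Omega_B\mathsf U$, $B$ finite; it holds in $T\in\mathsf U$ if both sides agree under every continuous homomorphism $\Omega_B\mathsf U\to T$. For a set $\Gamma$ of $\mathsf U$-pseudoidentities, $[\![\Gamma]\!]_{\mathsf U}$ denotes the members of $\mathsf U$ satisfying $\Gamma$. Provability: for finite $A$ define $\Gamma_\alpha\subseteq\Omega_A\mathsf U\times\Omega_A\mathsf U$: $\Gamma_0$ is the set of pairs $(\mathbf t(\varphi(u),w_1,\dots,w_n),\mathbf t(\varphi(v),w_1,\dots,w_n))$ with $u=v$ or $v=u$ in $\Gamma$, $u,v\in\Omega_B\mathsf U$, $\varphi:\Omega_B\mathsf U\to\Omega_A\mathsf U$ a continuous homomorphism, $\mathbf t$ a term, $w_i\in\Omega_A\mathsf U$; $\Gamma_{2\alpha+1}$ is the transitive closure of $\Gamma_{2\alpha}$; $\Gamma_{2\alpha+2}$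 the topological closure of $\Gamma_{2\alpha+1}$; unions at limit ordinals. $u=v$ is provable from $\Gamma$ if $(u,v)\in\bigcup_\alpha\Gamma_\alpha$. The pseudovariety $\mathsf U$ is strong if for every set $\Gamma$ of $\mathsf U$-pseudoidentities, every $\mathsf U$-pseudoidentity valid in $[\![\Gamma]\!]_{\mathsf U}$ is provable from $\Gamma$. *)

theory Defs
  imports "HOL-Analysis.Analysis"
begin

record ('f, 'a) alg =
  carr :: "'a set"
  opr  :: "'f \<Rightarrow> 'a list \<Rightarrow> 'a"

definition is_alg :: "'f set \<Rightarrow> ('f \<Rightarrow> nat) \<Rightarrow> ('f, 'a) alg \<Rightarrow> bool" where
  "is_alg F ar M \<longleftrightarrow>
     (\<forall>f\<in>F. \<forall>xs. length xs = ar f \<and> set xs \<subseteq> carr M \<longrightarrow> opr M f xs \<in> carr M)"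

definition is_hom :: "'f set \<Rightarrow> ('f \<Rightarrow> nat) \<Rightarrow> ('f, 'a) alg \<Rightarrow> ('f, 'b) alg \<Rightarrow> ('a \<Rightarrow> 'b) \<Rightarrow> bool" where
  "is_hom F ar M N h \<longleftrightarrow>
     (\<forall>x\<in>carr M. h x \<in> carr N) \<and>
     (\<forall>f\<in>F. \<forall>xs. length xs = ar f \<and> set xs \<subseteq> carr M \<longrightarrow>
                 h (opr M f xs) = opr N f (map h xs))"

datatype ('f, 'v) trm = Var 'v | App 'f "('f, 'v) trm list"

fun wf_trm :: "'f set \<Rightarrow> ('f \<Rightarrow> nat) \<Rightarrow> ('f, 'v) trm \<Rightarrow> bool" where
  "wf_trm F ar (Var v) = True"
| "wf_trm F ar (App f ts) = (f \<in> F \<and> length ts = ar f \<and> (\<forall>t\<in>set ts. wf_trm F ar t))"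

fun teval :: "('f, 'a) alg \<Rightarrow> ('v \<Rightarrow> 'a) \<Rightarrow> ('f, 'v) trm \<Rightarrow> 'a" where
  "teval M \<sigma> (Var v) = \<sigma> v"
| "teval M \<sigma> (App f ts) = opr M f (map (teval M \<sigma>) ts)"

definition satisfies :: "('f, 'a) alg \<Rightarrow> (('f, nat) trm \<times> ('f, nat) trm) set \<Rightarrow> bool" where
  "satisfies M \<Sigma> \<longleftrightarrow>
     (\<forall>(s, t)\<in>\<Sigma>. \<forall>\<sigma>. (\<forall>v. \<sigma> v \<in> carr M) \<longrightarrow> teval M \<sigma> s = teval M \<sigma> t)"

inductive_set gen_set :: "'f set \<Rightarrow> ('f \<Rightarrow> nat) \<Rightarrow> ('f, 'a) alg \<Rightarrow> 'a set \<Rightarrow> 'a set"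
  for F ar M G where
  base: "x \<in> G \<Longrightarrow> x \<in> gen_set F ar M G"
| step: "f \<in> F \<Longrightarrow> length xs = ar f \<Longrightarrow> (\<And>y. y \<in> set xs \<Longrightarrow> y \<in> gen_set F ar M G)
         \<Longrightarrow> opr M f xs \<in> gen_set F ar M G"

text \<open>Finitely generated algebras of a finite type are countable,
  so it suffices (up to isomorphism) to consider carriers contained in nat.\<close>
definition locally_finite :: "'f set \<Rightarrow> ('f \<Rightarrow> nat) \<Rightarrow> (('f, nat) trm \<times> ('f, nat) trm) set \<Rightarrow> bool" where
  "locally_finite F ar \<Sigma> \<longleftrightarrow>
     (\<forall>(M :: ('f, nat) alg) G. is_alg F ar M \<and> satisfies M \<Sigma> \<and> finite G \<and> G \<subseteq> carr M \<and>
        gen_set F ar M G = carr M \<longrightarrow> finite (carr M))"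

text \<open>Finite algebras are represented (up to isomorphism) with carriers in nat.
  A class of finite algebras is a set of such algebras.\<close>
definition V_of :: "'f set \<Rightarrow> ('f \<Rightarrow> nat) \<Rightarrow> (('f, nat) trm \<times> ('f, nat) trm) set \<Rightarrow> ('f, nat) alg set" where
  "V_of F ar \<Sigma> = {T. is_alg F ar T \<and> finite (carr T) \<and> satisfies T \<Sigma>}"

section \<open>Free pro-U algebras as compatible families (inverse limit)\<close>

type_synonym 'f coord = "('f, nat) alg \<times> (nat \<Rightarrow> nat)"

definition coords :: "('f, nat) alg set \<Rightarrow> nat set \<Rightarrow> 'f coord set" where
  "coords U A = {(T, \<psi>). T \<in> U \<and> \<psi> \<in> A \<rightarrow>\<^sub>E carr T}"

definition Omega :: "'f set \<Rightarrow> ('f \<Rightarrow> nat) \<Rightarrow> ('f, nat) alg set \<Rightarrow> nat set \<Rightarrow> ('f coord \<Rightarrow> nat) set" where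
  "Omega F ar U A =
     {x \<in> (\<Pi>\<^sub>E c\<in>coords U A. carr (fst c)).
        \<forall>T \<psi> T' \<psi>' h. (T, \<psi>) \<in> coords U A \<and> (T', \<psi>') \<in> coords U A \<and> is_hom F ar T T' h \<and>
           (\<forall>a\<in>A. h (\<psi> a) = \<psi>' a) \<longrightarrow> h (x (T, \<psi>)) = x (T', \<psi>')}"

definition Omega_alg :: "'f set \<Rightarrow> ('f \<Rightarrow> nat) \<Rightarrow> ('f, nat) alg set \<Rightarrow> nat set \<Rightarrow> ('f, 'f coord \<Rightarrow> nat) alg" where
  "Omega_alg F ar U A =
     \<lparr>carr = Omega F ar U A,
      opr = (\<lambda>f xs. \<lambda>c\<in>coords U A. opr (fst c) f (map (\<lambda>x. x c) xs))\<rparr>"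

definition Omega_top :: "'f set \<Rightarrow> ('f \<Rightarrow> nat) \<Rightarrow> ('f, nat) alg set \<Rightarrow> nat set \<Rightarrow> ('f coord \<Rightarrow> nat) topology" where
  "Omega_top F ar U A =
     subtopology (product_topology (\<lambda>c. discrete_topology (carr (fst c))) (coords U A)) (Omega F ar U A)"

definition cont_hom_OO :: "'f set \<Rightarrow> ('f \<Rightarrow> nat) \<Rightarrow> ('f, nat) alg set \<Rightarrow> nat set \<Rightarrow> nat set
    \<Rightarrow> (('f coord \<Rightarrow> nat) \<Rightarrow> ('f coord \<Rightarrow> nat)) \<Rightarrow> bool" where
  "cont_hom_OO F ar U B A \<phi> \<longleftrightarrow>
     is_hom F ar (Omega_alg F ar U B) (Omega_alg F ar U A) \<phi> \<and>
     continuous_map (Omega_top F ar U B) (Omega_top F ar U A) \<phi>"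

definition cont_hom_OT :: "'f set \<Rightarrow> ('f \<Rightarrow> nat) \<Rightarrow> ('f, nat) alg set \<Rightarrow> nat set
    \<Rightarrow> ('f, nat) alg \<Rightarrow> (('f coord \<Rightarrow> nat) \<Rightarrow> nat) \<Rightarrow> bool" where
  "cont_hom_OT F ar U B T \<phi> \<longleftrightarrow>
     is_hom F ar (Omega_alg F ar U B) T \<phi> \<and>
     continuous_map (Omega_top F ar U B) (discrete_topology (carr T)) \<phi>"

text \<open>A U-pseudoidentity u = v over the finite set B of variables is the triple (B, u, v).\<close>
type_synonym 'f pseudoid = "nat set \<times> ('f coord \<Rightarrow> nat) \<times> ('f coord \<Rightarrow> nat)"

definition is_pseudoid :: "'f set \<Rightarrow> ('f \<Rightarrow> nat) \<Rightarrow> ('f, nat) alg set \<Rightarrow> 'f pseudoid \<Rightarrow> bool" where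
  "is_pseudoid F ar U p \<longleftrightarrow>
     (case p of (B, u, v) \<Rightarrow> finite B \<and> u \<in> Omega F ar U B \<and> v \<in> Omega F ar U B)"

definition holds_in :: "'f set \<Rightarrow> ('f \<Rightarrow> nat) \<Rightarrow> ('f, nat) alg set \<Rightarrow> ('f, nat) alg \<Rightarrow> 'f pseudoid \<Rightarrow> bool" where
  "holds_in F ar U T p \<longleftrightarrow>
     (case p of (B, u, v) \<Rightarrow> \<forall>\<phi>. cont_hom_OT F ar U B T \<phi> \<longrightarrow> \<phi> u = \<phi> v)"

definition models :: "'f set \<Rightarrow> ('f \<Rightarrow> nat) \<Rightarrow> ('f, nat) alg set \<Rightarrow> 'f pseudoid set \<Rightarrow> ('f, nat) alg set" where
  "models F ar U \<Gamma> = {T \<in> U. \<forall>p\<in>\<Gamma>. holds_in F ar U T p}"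

definition Gamma0 :: "'f set \<Rightarrow> ('f \<Rightarrow> nat) \<Rightarrow> ('f, nat) alg set \<Rightarrow> 'f pseudoid set \<Rightarrow> nat set
    \<Rightarrow> (('f coord \<Rightarrow> nat) \<times> ('f coord \<Rightarrow> nat)) set" where
  "Gamma0 F ar U \<Gamma> A =
     {(teval (Omega_alg F ar U A) (w(0 := \<phi> u)) t, teval (Omega_alg F ar U A) (w(0 := \<phi> v)) t)
        | B u v \<phi> t w. ((B, u, v) \<in> \<Gamma> \<or> (B, v, u) \<in> \<Gamma>) \<and> cont_hom_OO F ar U B A \<phi> \<and>
           wf_trm F ar (t :: ('f, nat) trm) \<and> (\<forall>i::nat. w i \<in> Omega F ar U A)}"

text \<open>The union over all ordinals of the transfinite sequence Gamma_alpha
  (alternating transitive closure and topological closure) is the least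
  relation containing the base that is transitive and topologically closed.\<close>
definition provable_rel :: "'f set \<Rightarrow> ('f \<Rightarrow> nat) \<Rightarrow> ('f, nat) alg set \<Rightarrow> 'f pseudoid set \<Rightarrow> nat set
    \<Rightarrow> (('f coord \<Rightarrow> nat) \<times> ('f coord \<Rightarrow> nat)) set" where
  "provable_rel F ar U \<Gamma> A =
     lfp (\<lambda>R. Gamma0 F ar U \<Gamma> A \<union> Id_on (Omega F ar U A) \<union> R\<^sup>+ \<union>
              (prod_topology (Omega_top F ar U A) (Omega_top F ar U A)) closure_of R)"

definition strong :: "'f set \<Rightarrow> ('f \<Rightarrow> nat) \<Rightarrow> ('f, nat) alg set \<Rightarrow> bool" where
  "strong F ar U \<longleftrightarrow>
     (\<forall>\<Gamma>. (\<forall>p\<in>\<Gamma>. is_pseudoid F ar U p) \<longrightarrow>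
        (\<forall>A u v. finite A \<and> u \<in> Omega F ar U A \<and> v \<in> Omega F ar U A \<and>
           (\<forall>T\<in>models F ar U \<Gamma>. holds_in F ar U T (A, u, v)) \<longrightarrow>
           (u, v) \<in> provable_rel F ar U \<Gamma> A))"

end

theory Submission
  imports Defs "HOL-Library.Countable"
begin

text \<open>
  Local finiteness makes every \<open>\<Omega>\<^sub>A V\<close> (with \<open>A\<close> finite) a finite algebra, namely the
  relatively free algebra of the variety on \<open>A\<close>: each of its elements is the value of a term at
  the generators, and its topology is discrete.  Fix \<open>\<Gamma>\<close> and \<open>A\<close>, let \<open>R\<close> be the provability
  relation on \<open>\<Omega>\<^sub>A V\<close> and \<open>\<theta>\<close> its syntactic congruence: \<open>a \<theta> b\<close> iff \<open>(p a, c) \<in> R \<longleftrightarrow> (p b, c) \<in> R\<close>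
  for every unary polynomial \<open>p\<close> and every \<open>c\<close>.  Since \<open>R\<close> is transitive and reflexive, \<open>\<theta>\<close> is a
  congruence contained in \<open>R\<close>; since \<open>\<Gamma>\<^sub>0\<close> is symmetric and closed under unary polynomials, it is
  contained in \<open>\<theta>\<close>.  The finite quotient \<open>T = \<Omega>\<^sub>A V / \<theta>\<close> satisfies \<open>\<Gamma>\<close>: every homomorphism
  \<open>\<Omega>\<^sub>B V \<rightarrow> T\<close> factors through the quotient map by a substitution \<open>\<Omega>\<^sub>B V \<rightarrow> \<Omega>\<^sub>A V\<close>, which sends each
  member of \<open>\<Gamma>\<close> into \<open>\<Gamma>\<^sub>0 \<subseteq> \<theta>\<close>.  Hence a pseudoidentity \<open>u = v\<close> valid in \<open>[\<Gamma>]\<close> holds in \<open>T\<close>,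
  so \<open>u \<theta> v\<close> and therefore \<open>(u, v) \<in> R\<close>.
\<close>

fun vars :: "('f, 'v) trm \<Rightarrow> 'v set" where
  "vars (Var v) = {v}"
| "vars (App f ts) = (\<Union>t\<in>set ts. vars t)"

fun tsubst :: "('v \<Rightarrow> ('f, 'w) trm) \<Rightarrow> ('f, 'v) trm \<Rightarrow> ('f, 'w) trm" where
  "tsubst \<rho> (Var v) = \<rho> v"
| "tsubst \<rho> (App f ts) = App f (map (tsubst \<rho>) ts)"

lemma teval_tsubst: "teval M \<sigma> (tsubst \<rho> t) = teval M (\<lambda>v. teval M \<sigma> (\<rho> v)) t"
  by (induction t) (auto intro!: arg_cong[where f="opr M _"] map_cong)

lemma teval_cong: "(\<And>v. v \<in> vars t \<Longrightarrow> \<sigma> v = \<sigma>' v) \<Longrightarrow> teval M \<sigma> t = teval M \<sigma>' t"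
  by (induction t) (auto intro!: arg_cong[where f="opr M _"] map_cong)

lemma wf_tsubst:
  "wf_trm F ar t \<Longrightarrow> (\<And>v. v \<in> vars t \<Longrightarrow> wf_trm F ar (\<rho> v)) \<Longrightarrow> wf_trm F ar (tsubst \<rho> t)"
  by (induction t) auto

lemma vars_tsubst: "vars (tsubst \<rho> t) = (\<Union>v\<in>vars t. vars (\<rho> v))"
  by (induction t) auto

lemma teval_closed:
  assumes "is_alg F ar M" and "wf_trm F ar t" and "\<And>v. v \<in> vars t \<Longrightarrow> \<sigma> v \<in> carr M"
  shows "teval M \<sigma> t \<in> carr M"
  using assms(2,3)
proof (induction t)
  case (App f ts)
  then have "set (map (teval M \<sigma>) ts) \<subseteq> carr M" by auto
  then show ?case using App.prems assms(1) unfolding is_alg_def by auto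
qed simp

lemma satisfiesD:
  "satisfies M \<Sigma> \<Longrightarrow> (s, t) \<in> \<Sigma> \<Longrightarrow> (\<And>v. \<sigma> v \<in> carr M) \<Longrightarrow> teval M \<sigma> s = teval M \<sigma> t"
  unfolding satisfies_def by blast

lemma is_hom_comp:
  assumes g: "is_hom F ar M N g" and h: "is_hom F ar N K h"
  shows "is_hom F ar M K (h \<circ> g)"
  unfolding is_hom_def
proof (intro conjI ballI allI impI)
  show "(h \<circ> g) x \<in> carr K" if "x \<in> carr M" for x
    using that g h by (simp add: is_hom_def)
  fix f xs assume f: "f \<in> F" and xs: "length xs = ar f \<and> set xs \<subseteq> carr M"
  then have "set (map g xs) \<subseteq> carr N" using g by (auto simp: is_hom_def)
  then show "(h \<circ> g) (opr M f xs) = opr K f (map (h \<circ> g) xs)"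
    using f xs g h by (simp add: is_hom_def)
qed

lemma hom_teval:
  assumes "is_alg F ar M" and "is_hom F ar M N h" and "wf_trm F ar t"
    and "\<And>v. v \<in> vars t \<Longrightarrow> \<sigma> v \<in> carr M"
  shows "h (teval M \<sigma> t) = teval N (\<lambda>v. h (\<sigma> v)) t"
  using assms(3,4)
proof (induction t)
  case (App f ts)
  have "set (map (teval M \<sigma>) ts) \<subseteq> carr M"
    using App.prems by (auto intro!: teval_closed[OF assms(1)])
  then have "h (opr M f (map (teval M \<sigma>) ts)) = opr N f (map h (map (teval M \<sigma>) ts))"
    using App.prems assms(2) unfolding is_hom_def by auto
  also have "map h (map (teval M \<sigma>) ts) = map (teval N (\<lambda>v. h (\<sigma> v))) ts"
    using App by auto
  finally show ?case by simp
qed simp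

lemma Omega_extensional: "x \<in> Omega F ar U A \<Longrightarrow> x \<in> extensional (coords U A)"
  unfolding Omega_def by (auto simp: PiE_def)

lemma Omega_coord_in_carr: "x \<in> Omega F ar U A \<Longrightarrow> (T, \<psi>) \<in> coords U A \<Longrightarrow> x (T, \<psi>) \<in> carr T"
  unfolding Omega_def by (auto simp: PiE_def Pi_def)

lemma Omega_natural:
  "x \<in> Omega F ar U A \<Longrightarrow> (T, \<psi>) \<in> coords U A \<Longrightarrow> (T', \<psi>') \<in> coords U A \<Longrightarrow>
   is_hom F ar T T' h \<Longrightarrow> (\<And>a. a \<in> A \<Longrightarrow> h (\<psi> a) = \<psi>' a) \<Longrightarrow> h (x (T, \<psi>)) = x (T', \<psi>')"
  unfolding Omega_def by blast

lemma OmegaI: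
  assumes "x \<in> extensional (coords U A)"
    and "\<And>T \<psi>. (T, \<psi>) \<in> coords U A \<Longrightarrow> x (T, \<psi>) \<in> carr T"
    and "\<And>T \<psi> T' \<psi>' h. (T, \<psi>) \<in> coords U A \<Longrightarrow> (T', \<psi>') \<in> coords U A \<Longrightarrow>
      is_hom F ar T T' h \<Longrightarrow> (\<And>a. a \<in> A \<Longrightarrow> h (\<psi> a) = \<psi>' a) \<Longrightarrow> h (x (T, \<psi>)) = x (T', \<psi>')"
  shows "x \<in> Omega F ar U A"
  using assms unfolding Omega_def by (auto simp: PiE_def Pi_def)

lemma Omega_eqI:
  "x \<in> Omega F ar U A \<Longrightarrow> y \<in> Omega F ar U A \<Longrightarrow>
   (\<And>T \<psi>. (T, \<psi>) \<in> coords U A \<Longrightarrow> x (T, \<psi>) = y (T, \<psi>)) \<Longrightarrow> x = y"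
  by (metis Omega_extensional extensionalityI surj_pair)

lemma carr_Omega_alg [simp]: "carr (Omega_alg F ar U A) = Omega F ar U A"
  by (simp add: Omega_alg_def)

lemma opr_Omega_alg:
  "opr (Omega_alg F ar U A) f xs = (\<lambda>c\<in>coords U A. opr (fst c) f (map (\<lambda>x. x c) xs))"
  by (simp add: Omega_alg_def)

lemma teval_Omega_alg_coord:
  "c \<in> coords U A \<Longrightarrow> teval (Omega_alg F ar U A) w t c = teval (fst c) (\<lambda>i. w i c) t"
  by (induction t) (auto simp: opr_Omega_alg intro!: arg_cong[where f="opr _ _"] map_cong)

lemma teval_Omega_alg_extensional:
  "(\<And>v. v \<in> vars t \<Longrightarrow> w v \<in> Omega F ar U A) \<Longrightarrow>
   teval (Omega_alg F ar U A) w t \<in> extensional (coords U A)"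
  by (cases t) (auto simp: opr_Omega_alg Omega_extensional)

lemma is_alg_Omega_alg:
  assumes "\<forall>T\<in>U. is_alg F ar T"
  shows "is_alg F ar (Omega_alg F ar U A)"
  unfolding is_alg_def carr_Omega_alg
proof (intro ballI allI impI OmegaI)
  fix f xs assume f: "f \<in> F" and xs: "length xs = ar f \<and> set xs \<subseteq> Omega F ar U A"
  have args: "set (map (\<lambda>x. x (T, \<psi>)) xs) \<subseteq> carr T" if "(T, \<psi>) \<in> coords U A" for T \<psi>
    using xs that Omega_coord_in_carr by fastforce
  show "opr (Omega_alg F ar U A) f xs \<in> extensional (coords U A)"
    by (simp add: opr_Omega_alg)
  fix T \<psi> assume c: "(T, \<psi>) \<in> coords U A"
  then have "is_alg F ar T" using assms by (auto simp: coords_def)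
  then show "opr (Omega_alg F ar U A) f xs (T, \<psi>) \<in> carr T"
    using c f xs args[OF c] by (auto simp: opr_Omega_alg is_alg_def)
  fix T' \<psi>' h assume c': "(T', \<psi>') \<in> coords U A" and h: "is_hom F ar T T' h"
    and h\<psi>: "\<And>a. a \<in> A \<Longrightarrow> h (\<psi> a) = \<psi>' a"
  have "h (opr T f (map (\<lambda>x. x (T, \<psi>)) xs)) = opr T' f (map h (map (\<lambda>x. x (T, \<psi>)) xs))"
    using h f xs args[OF c] unfolding is_hom_def by auto
  also have "map h (map (\<lambda>x. x (T, \<psi>)) xs) = map (\<lambda>x. x (T', \<psi>')) xs"
    using xs Omega_natural[OF _ c c' h h\<psi>] by auto
  finally show "h (opr (Omega_alg F ar U A) f xs (T, \<psi>)) = opr (Omega_alg F ar U A) f xs (T', \<psi>')"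
    using c c' by (simp add: opr_Omega_alg)
qed

definition gen :: "('f, nat) alg set \<Rightarrow> nat set \<Rightarrow> nat \<Rightarrow> ('f coord \<Rightarrow> nat)" where
  "gen U A a = (\<lambda>c\<in>coords U A. snd c a)"

lemma gen_in_Omega: "a \<in> A \<Longrightarrow> gen U A a \<in> Omega F ar U A"
  unfolding gen_def by (rule OmegaI) (auto simp: coords_def)

lemma satisfies_Omega_alg:
  assumes "\<forall>T\<in>U. satisfies T \<Sigma>"
  shows "satisfies (Omega_alg F ar U A) \<Sigma>"
  unfolding satisfies_def
proof (clarify)
  fix s t and \<sigma> :: "nat \<Rightarrow> _"
  assume st: "(s, t) \<in> \<Sigma>" and \<sigma>: "\<forall>v. \<sigma> v \<in> carr (Omega_alg F ar U A)"
  show "teval (Omega_alg F ar U A) \<sigma> s = teval (Omega_alg F ar U A) \<sigma> t"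
  proof (rule extensionalityI)
    show "teval (Omega_alg F ar U A) \<sigma> s \<in> extensional (coords U A)"
      "teval (Omega_alg F ar U A) \<sigma> t \<in> extensional (coords U A)"
      using \<sigma> by (auto intro!: teval_Omega_alg_extensional)
    fix c assume c: "c \<in> coords U A"
    obtain T \<psi> where cT: "c = (T, \<psi>)" by fastforce
    have "satisfies T \<Sigma>" using assms c cT by (auto simp: coords_def)
    moreover have "\<forall>v. \<sigma> v c \<in> carr T" using \<sigma> c cT Omega_coord_in_carr by (simp, blast)
    ultimately show "teval (Omega_alg F ar U A) \<sigma> s c = teval (Omega_alg F ar U A) \<sigma> t c"
      using st c cT by (simp add: teval_Omega_alg_coord satisfiesD)
  qed
qed

lemma Omega_top_eq_discrete:
  assumes "finite (Omega F ar U A)"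
  shows "Omega_top F ar U A = discrete_topology (Omega F ar U A)"
proof (rule finite_topspace_imp_discrete_topology)
  show "topspace (Omega_top F ar U A) = Omega F ar U A"
    unfolding Omega_top_def Omega_def by (auto simp: PiE_def Pi_def)
  show "Hausdorff_space (Omega_top F ar U A)"
    unfolding Omega_top_def
    by (intro Hausdorff_space_subtopology) (simp add: Hausdorff_space_product_topology)
qed (fact assms)

text \<open>The homomorphism \<open>\<Omega>\<^sub>B U \<rightarrow> \<Omega>\<^sub>A U\<close> sending the generator \<open>b\<close> to \<open>y b\<close>: its coordinate at
  \<open>(T, \<psi>)\<close> is the coordinate at \<open>(T, \<lambda>b. y b (T, \<psi>))\<close>.\<close>
definition Omega_subst ::
    "('f, nat) alg set \<Rightarrow> nat set \<Rightarrow> nat set \<Rightarrow> (nat \<Rightarrow> 'f coord \<Rightarrow> nat) \<Rightarrow> ('f coord \<Rightarrow> nat) \<Rightarrow> ('f coord \<Rightarrow> nat)"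
  where "Omega_subst U A B y x = (\<lambda>c\<in>coords U A. x (fst c, \<lambda>b\<in>B. y b c))"

lemma coords_subst:
  "(\<And>b. b \<in> B \<Longrightarrow> y b \<in> Omega F ar U A) \<Longrightarrow> (T, \<psi>) \<in> coords U A \<Longrightarrow>
   (T, \<lambda>b\<in>B. y b (T, \<psi>)) \<in> coords U B"
  using Omega_coord_in_carr by (fastforce simp: coords_def)

lemma Omega_subst_in_Omega:
  assumes y: "\<And>b. b \<in> B \<Longrightarrow> y b \<in> Omega F ar U A" and x: "x \<in> Omega F ar U B"
  shows "Omega_subst U A B y x \<in> Omega F ar U A"
proof (rule OmegaI)
  show "Omega_subst U A B y x \<in> extensional (coords U A)" by (simp add: Omega_subst_def)
  fix T \<psi> assume c: "(T, \<psi>) \<in> coords U A"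
  show "Omega_subst U A B y x (T, \<psi>) \<in> carr T"
    using Omega_coord_in_carr[OF x coords_subst[OF y c]] c by (simp add: Omega_subst_def)
  fix T' \<psi>' h assume c': "(T', \<psi>') \<in> coords U A" and h: "is_hom F ar T T' h"
    and h\<psi>: "\<And>a. a \<in> A \<Longrightarrow> h (\<psi> a) = \<psi>' a"
  have "h (x (T, \<lambda>b\<in>B. y b (T, \<psi>))) = x (T', \<lambda>b\<in>B. y b (T', \<psi>'))"
    by (rule Omega_natural[OF x coords_subst[OF y c] coords_subst[OF y c'] h])
      (auto intro: Omega_natural[OF y c c' h h\<psi>])
  then show "h (Omega_subst U A B y x (T, \<psi>)) = Omega_subst U A B y x (T', \<psi>')"
    using c c' by (simp add: Omega_subst_def)
qed

lemma is_hom_Omega_subst: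
  assumes "\<And>b. b \<in> B \<Longrightarrow> y b \<in> Omega F ar U A"
  shows "is_hom F ar (Omega_alg F ar U B) (Omega_alg F ar U A) (Omega_subst U A B y)"
  unfolding is_hom_def
proof (intro conjI ballI allI impI ext)
  fix x assume "x \<in> carr (Omega_alg F ar U B)"
  then show "Omega_subst U A B y x \<in> carr (Omega_alg F ar U A)"
    by (simp add: Omega_subst_in_Omega[OF assms])
next
  fix f xs c
  show "Omega_subst U A B y (opr (Omega_alg F ar U B) f xs) c =
        opr (Omega_alg F ar U A) f (map (Omega_subst U A B y) xs) c"
    using coords_subst[OF assms, where T="fst c" and \<psi>="snd c"]
    by (cases "c \<in> coords U A") (auto simp: Omega_subst_def opr_Omega_alg comp_def)
qed

lemma Omega_subst_gen:
  assumes y: "\<And>b. b \<in> B \<Longrightarrow> y b \<in> Omega F ar U A" and b: "b \<in> B"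
  shows "Omega_subst U A B y (gen U B b) = y b"
proof (rule extensionalityI)
  show "y b \<in> extensional (coords U A)" using Omega_extensional[OF y[OF b]] .
  fix c assume "c \<in> coords U A"
  then show "Omega_subst U A B y (gen U B b) c = y b c"
    using b coords_subst[OF y, where T="fst c" and \<psi>="snd c"] by (simp add: Omega_subst_def gen_def)
qed (simp add: Omega_subst_def)

instance trm :: (countable, countable) countable
  by countable_datatype

lemma map_trm_inverse:
  "wf_trm F ar t \<Longrightarrow> (\<And>f. f \<in> F \<Longrightarrow> h (g f) = f) \<Longrightarrow> map_trm h id (map_trm g id t) = t"
  by (induction t) (auto intro: map_idI)

lemma countable_wf_trm:
  assumes "finite F"
  shows "countable {t :: ('f, nat) trm. wf_trm F ar t}"
proof -
  let ?g = "to_nat_on F" and ?h = "from_nat_into F"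
  have "\<And>f. f \<in> F \<Longrightarrow> ?h (?g f) = f"
    using assms by (simp add: countable_finite from_nat_into_to_nat_on)
  then have "inj_on (map_trm ?g id) {t :: ('f, nat) trm. wf_trm F ar t}"
    by (intro inj_on_inverseI[where g="map_trm ?h id"]) (auto intro: map_trm_inverse)
  moreover have "countable (map_trm ?g id ` {t :: ('f, nat) trm. wf_trm F ar t})"
    by (rule countableI_type)
  ultimately show ?thesis using countable_image_inj_on by blast
qed

definition terms_on :: "'f set \<Rightarrow> ('f \<Rightarrow> nat) \<Rightarrow> nat set \<Rightarrow> ('f, nat) trm set" where
  "terms_on F ar A = {t. wf_trm F ar t \<and> vars t \<subseteq> A}"

lemma App_in_terms_on:
  "f \<in> F \<Longrightarrow> length ts = ar f \<Longrightarrow> set ts \<subseteq> terms_on F ar A \<Longrightarrow> App f ts \<in> terms_on F ar A"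
  unfolding terms_on_def by auto

lemma Var_in_terms_on: "a \<in> A \<Longrightarrow> Var a \<in> terms_on F ar A"
  unfolding terms_on_def by auto

lemma teval_terms_on_closed:
  "t \<in> terms_on F ar A \<Longrightarrow> is_alg F ar T \<Longrightarrow> \<forall>a\<in>A. \<psi> a \<in> carr T \<Longrightarrow> teval T \<psi> t \<in> carr T"
  unfolding terms_on_def by (auto intro!: teval_closed)

lemma tsubst_in_terms_on:
  "wf_trm F ar t \<Longrightarrow> (\<And>v. \<rho> v \<in> terms_on F ar A) \<Longrightarrow> tsubst \<rho> t \<in> terms_on F ar A"
  unfolding terms_on_def by (auto simp: vars_tsubst intro!: wf_tsubst)

text \<open>Elements of the quotient are natural-number codes of the \<open>E\<close>-classes, because the
  algebras of \<open>V_of\<close> have carriers in \<open>nat\<close>.\<close>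
locale term_quotient =
  fixes F :: "'f set" and ar :: "'f \<Rightarrow> nat" and A :: "nat set"
    and E :: "(('f, nat) trm \<times> ('f, nat) trm) set"
    and \<Sigma> :: "(('f, nat) trm \<times> ('f, nat) trm) set"
  assumes finite_F: "finite F"
    and equiv_E: "equiv (terms_on F ar A) E"
    and App_cong: "\<And>f ss ts. f \<in> F \<Longrightarrow> length ss = ar f \<Longrightarrow>
      list_all2 (\<lambda>s t. (s, t) \<in> E) ss ts \<Longrightarrow> (App f ss, App f ts) \<in> E"
    and subst_\<Sigma>: "\<And>s t \<rho>. (s, t) \<in> \<Sigma> \<Longrightarrow> (\<And>v. \<rho> v \<in> terms_on F ar A) \<Longrightarrow>
      (tsubst \<rho> s, tsubst \<rho> t) \<in> E"
    and wf_\<Sigma>: "\<forall>(s, t)\<in>\<Sigma>. wf_trm F ar s \<and> wf_trm F ar t"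
begin

abbreviation "Q \<equiv> terms_on F ar A"

definition cls :: "('f, nat) trm \<Rightarrow> ('f, nat) trm set" where
  "cls t = {s \<in> Q. (s, t) \<in> E}"

definition code :: "('f, nat) trm \<Rightarrow> nat" where
  "code t = to_nat_on (cls ` Q) (cls t)"

definition rep :: "nat \<Rightarrow> ('f, nat) trm" where
  "rep n = (SOME t. t \<in> Q \<and> code t = n)"

definition Quot :: "('f, nat) alg" where
  "Quot = \<lparr>carr = code ` Q, opr = (\<lambda>f ns. code (App f (map rep ns)))\<rparr>"

lemma carr_Quot [simp]: "carr Quot = code ` Q"
  by (simp add: Quot_def)

lemma code_eq_iff: "s \<in> Q \<Longrightarrow> t \<in> Q \<Longrightarrow> code s = code t \<longleftrightarrow> (s, t) \<in> E"
proof -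
  assume s: "s \<in> Q" and t: "t \<in> Q"
  have "countable Q"
    using countable_wf_trm[OF finite_F, of ar] unfolding terms_on_def
    by (rule countable_subset[rotated]) auto
  then have "inj_on (to_nat_on (cls ` Q)) (cls ` Q)"
    by (intro inj_on_to_nat_on) auto
  then have "code s = code t \<longleftrightarrow> cls s = cls t"
    unfolding code_def using inj_on_eq_iff[of _ _ "cls s" "cls t"] s t by auto
  also have "\<dots> \<longleftrightarrow> (s, t) \<in> E"
  proof
    assume "cls s = cls t"
    moreover have "s \<in> cls s" using s equiv_E unfolding cls_def equiv_def refl_on_def by auto
    ultimately show "(s, t) \<in> E" unfolding cls_def by auto
  next
    assume "(s, t) \<in> E"
    then show "cls s = cls t"
      using equiv_E unfolding cls_def equiv_def by (auto elim: transE symE)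
  qed
  finally show ?thesis .
qed

lemma rep: "n \<in> code ` Q \<Longrightarrow> rep n \<in> Q \<and> code (rep n) = n"
  unfolding rep_def by (rule someI_ex) auto

lemma rep_code: "t \<in> Q \<Longrightarrow> (rep (code t), t) \<in> E"
  using rep[of "code t"] code_eq_iff by auto

lemma opr_Quot_code:
  assumes f: "f \<in> F" and l: "length ts = ar f" and ts: "set ts \<subseteq> Q"
  shows "opr Quot f (map code ts) = code (App f ts)"
proof -
  have reps: "set (map rep (map code ts)) \<subseteq> Q" using ts rep by auto
  have "list_all2 (\<lambda>s t. (s, t) \<in> E) (map rep (map code ts)) ts"
    using ts nth_mem by (fastforce simp: list_all2_conv_all_nth intro!: rep_code)
  then have "(App f (map rep (map code ts)), App f ts) \<in> E"
    using App_cong f l by simp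
  moreover have "App f (map rep (map code ts)) \<in> Q" "App f ts \<in> Q"
    using f l reps ts by (auto intro!: App_in_terms_on)
  ultimately show ?thesis by (simp add: Quot_def code_eq_iff)
qed

lemma is_alg_Quot: "is_alg F ar Quot"
  unfolding is_alg_def
proof (intro ballI allI impI)
  fix f ns assume f: "f \<in> F" and ns: "length ns = ar f \<and> set ns \<subseteq> carr Quot"
  then have "App f (map rep ns) \<in> Q" using rep by (intro App_in_terms_on) auto
  then show "opr Quot f ns \<in> carr Quot" by (simp add: Quot_def)
qed

lemma teval_Quot:
  "wf_trm F ar t \<Longrightarrow> (\<And>v. \<sigma> v \<in> carr Quot) \<Longrightarrow>
   teval Quot \<sigma> t = code (tsubst (\<lambda>v. rep (\<sigma> v)) t) \<and> tsubst (\<lambda>v. rep (\<sigma> v)) t \<in> Q"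
proof (induction t)
  case (Var x)
  then show ?case using rep[of "\<sigma> x"] by simp
next
  case (App f ts)
  let ?\<rho> = "\<lambda>v. rep (\<sigma> v)"
  have IH: "\<And>t. t \<in> set ts \<Longrightarrow> teval Quot \<sigma> t = code (tsubst ?\<rho> t) \<and> tsubst ?\<rho> t \<in> Q"
    using App by auto
  have f: "f \<in> F" and l: "length ts = ar f" using App.prems by auto
  have args: "set (map (tsubst ?\<rho>) ts) \<subseteq> Q" using IH by auto
  have "teval Quot \<sigma> (App f ts) = opr Quot f (map code (map (tsubst ?\<rho>) ts))"
    using IH by (simp cong: map_cong)
  also have "\<dots> = code (App f (map (tsubst ?\<rho>) ts))"
    using opr_Quot_code[OF f _ args] l by simp
  finally show ?case using App_in_terms_on[OF f _ args] l by simp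
qed

lemma satisfies_Quot: "satisfies Quot \<Sigma>"
  unfolding satisfies_def
proof (clarify)
  fix s t and \<sigma> :: "nat \<Rightarrow> nat" assume st: "(s, t) \<in> \<Sigma>" and \<sigma>: "\<forall>v. \<sigma> v \<in> carr Quot"
  have wf: "wf_trm F ar s" "wf_trm F ar t" using st wf_\<Sigma> by auto
  have "(tsubst (\<lambda>v. rep (\<sigma> v)) s, tsubst (\<lambda>v. rep (\<sigma> v)) t) \<in> E"
    using \<sigma> rep by (intro subst_\<Sigma>[OF st]) auto
  then show "teval Quot \<sigma> s = teval Quot \<sigma> t"
    using teval_Quot[OF wf(1), of \<sigma>] teval_Quot[OF wf(2), of \<sigma>] \<sigma> code_eq_iff by auto
qed

lemma gen_set_Quot: "gen_set F ar Quot (code ` Var ` A) = carr Quot"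
proof
  show "gen_set F ar Quot (code ` Var ` A) \<subseteq> carr Quot"
  proof
    fix x assume "x \<in> gen_set F ar Quot (code ` Var ` A)"
    then show "x \<in> carr Quot"
    proof (induction rule: gen_set.induct)
      case (base x)
      then show ?case using Var_in_terms_on[of _ A F ar] by auto
    next
      case (step f xs)
      then have "set xs \<subseteq> carr Quot" by auto
      then show ?case using is_alg_Quot step(1,2) unfolding is_alg_def by blast
    qed
  qed
  have "code t \<in> gen_set F ar Quot (code ` Var ` A)" if "t \<in> Q" for t
    using that
  proof (induction t)
    case (Var x)
    then show ?case by (auto simp: terms_on_def intro: gen_set.base)
  next
    case (App f ts)
    then have f: "f \<in> F" and l: "length ts = ar f" and args: "set ts \<subseteq> Q"
      by (auto simp: terms_on_def)
    have "opr Quot f (map code ts) \<in> gen_set F ar Quot (code ` Var ` A)"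
      using App args f l by (intro gen_set.step) auto
    then show ?case using opr_Quot_code[OF f l args] by simp
  qed
  then show "carr Quot \<subseteq> gen_set F ar Quot (code ` Var ` A)" by auto
qed

lemma Quot_in_V_of:
  assumes lf: "locally_finite F ar \<Sigma>" and A: "finite A"
  shows "Quot \<in> V_of F ar \<Sigma>"
proof -
  have "finite (carr Quot)"
  proof (rule lf[unfolded locally_finite_def, rule_format])
    show "is_alg F ar Quot \<and> satisfies Quot \<Sigma> \<and> finite (code ` Var ` A) \<and>
      code ` Var ` A \<subseteq> carr Quot \<and> gen_set F ar Quot (code ` Var ` A) = carr Quot"
      using is_alg_Quot satisfies_Quot gen_set_Quot A Var_in_terms_on[of _ A F ar]
      by (simp add: image_subset_iff)
  qed
  then show ?thesis using is_alg_Quot satisfies_Quot by (simp add: V_of_def)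
qed

end

section \<open>The free algebras of a locally finite variety\<close>

definition free_cong ::
    "'f set \<Rightarrow> ('f \<Rightarrow> nat) \<Rightarrow> (('f, nat) trm \<times> ('f, nat) trm) set \<Rightarrow> nat set \<Rightarrow>
     (('f, nat) trm \<times> ('f, nat) trm) set" where
  "free_cong F ar \<Sigma> A = {(s, t). s \<in> terms_on F ar A \<and> t \<in> terms_on F ar A \<and>
     (\<forall>T\<in>V_of F ar \<Sigma>. \<forall>\<psi>. (\<forall>a\<in>A. \<psi> a \<in> carr T) \<longrightarrow> teval T \<psi> s = teval T \<psi> t)}"

locale lf_variety =
  fixes F :: "'f set" and ar :: "'f \<Rightarrow> nat" and \<Sigma> :: "(('f, nat) trm \<times> ('f, nat) trm) set"
  assumes finite_F: "finite F"
    and wf_\<Sigma>: "\<forall>(s, t)\<in>\<Sigma>. wf_trm F ar s \<and> wf_trm F ar t"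
    and locally_finite: "locally_finite F ar \<Sigma>"
begin

abbreviation "V \<equiv> V_of F ar \<Sigma>"

lemma V_is_alg: "T \<in> V \<Longrightarrow> is_alg F ar T"
  by (simp add: V_of_def)

lemma is_alg_Omega_alg_V: "is_alg F ar (Omega_alg F ar V A)"
  using V_is_alg by (blast intro: is_alg_Omega_alg)

lemma satisfies_Omega_alg_V: "satisfies (Omega_alg F ar V A) \<Sigma>"
  by (rule satisfies_Omega_alg) (simp add: V_of_def)

lemma term_quotient_free_cong: "term_quotient F ar A (free_cong F ar \<Sigma> A) \<Sigma>"
proof
  show "finite F" by (fact finite_F)
  show "\<forall>(s, t)\<in>\<Sigma>. wf_trm F ar s \<and> wf_trm F ar t" by (fact wf_\<Sigma>)
  show "equiv (terms_on F ar A) (free_cong F ar \<Sigma> A)"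
    by (rule equivI) (auto simp: free_cong_def refl_on_def sym_def trans_def)
next
  fix f ss ts assume f: "f \<in> F" and l: "length ss = ar f"
    and st: "list_all2 (\<lambda>s t. (s, t) \<in> free_cong F ar \<Sigma> A) ss ts"
  have "length ts = ar f" using st l by (simp add: list_all2_lengthD)
  moreover have "set ss \<subseteq> terms_on F ar A" "set ts \<subseteq> terms_on F ar A"
    using st by (fastforce simp: list_all2_conv_all_nth free_cong_def in_set_conv_nth)+
  moreover have "map (teval T \<psi>) ss = map (teval T \<psi>) ts"
    if "T \<in> V" "\<forall>a\<in>A. \<psi> a \<in> carr T" for T \<psi>
    using st that by (auto simp: list_all2_conv_all_nth free_cong_def intro!: nth_equalityI)
  ultimately show "(App f ss, App f ts) \<in> free_cong F ar \<Sigma> A"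
    using f l by (auto simp: free_cong_def intro!: App_in_terms_on)
next
  fix s t and \<rho> :: "nat \<Rightarrow> ('f, nat) trm"
  assume st: "(s, t) \<in> \<Sigma>" and \<rho>: "\<And>v. \<rho> v \<in> terms_on F ar A"
  have "teval T \<psi> (tsubst \<rho> s) = teval T \<psi> (tsubst \<rho> t)"
    if T: "T \<in> V" and \<psi>: "\<forall>a\<in>A. \<psi> a \<in> carr T" for T \<psi>
  proof -
    have "\<forall>v. teval T \<psi> (\<rho> v) \<in> carr T"
      using \<rho> teval_terms_on_closed V_is_alg[OF T] \<psi> by blast
    moreover have "satisfies T \<Sigma>" using T by (simp add: V_of_def)
    ultimately show ?thesis using st by (simp add: teval_tsubst satisfiesD)
  qed
  then show "(tsubst \<rho> s, tsubst \<rho> t) \<in> free_cong F ar \<Sigma> A"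
    using st wf_\<Sigma> \<rho> by (auto simp: free_cong_def intro!: tsubst_in_terms_on)
qed

sublocale free: term_quotient F ar A "free_cong F ar \<Sigma> A" \<Sigma> for A
  by (rule term_quotient_free_cong)

definition free_gens :: "nat set \<Rightarrow> nat \<Rightarrow> nat" where
  "free_gens A = (\<lambda>a\<in>A. free.code A (Var a))"

lemma free_coords: "finite A \<Longrightarrow> (free.Quot A, free_gens A) \<in> coords V A"
  using free.Quot_in_V_of[OF locally_finite] Var_in_terms_on[of _ A F ar]
  by (auto simp: coords_def free_gens_def)

lemma free_universal:
  assumes "(T, \<psi>) \<in> coords V A"
  obtains h where "is_hom F ar (free.Quot A) T h"
    and "\<And>s. s \<in> terms_on F ar A \<Longrightarrow> h (free.code A s) = teval T \<psi> s"
proof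
  have T: "T \<in> V" and \<psi>: "\<forall>a\<in>A. \<psi> a \<in> carr T" using assms by (auto simp: coords_def)
  define h where "h n = teval T \<psi> (free.rep A n)" for n
  show h_code: "h (free.code A s) = teval T \<psi> s" if s: "s \<in> terms_on F ar A" for s
    using free.rep_code[OF s] T \<psi> unfolding h_def free_cong_def by auto
  show "is_hom F ar (free.Quot A) T h"
    unfolding is_hom_def
  proof (intro conjI ballI allI impI)
    fix n assume "n \<in> carr (free.Quot A)"
    then obtain s where "s \<in> terms_on F ar A" "n = free.code A s" by auto
    then show "h n \<in> carr T" using h_code teval_terms_on_closed V_is_alg[OF T] \<psi> by auto
  next
    fix f ns assume f: "f \<in> F" and ns: "length ns = ar f \<and> set ns \<subseteq> carr (free.Quot A)"
    have reps: "set (map (free.rep A) ns) \<subseteq> terms_on F ar A" using ns free.rep by auto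
    have "map (free.code A) (map (free.rep A) ns) = ns" using ns free.rep by (auto intro!: map_idI)
    then have "opr (free.Quot A) f ns = free.code A (App f (map (free.rep A) ns))"
      using free.opr_Quot_code[OF f _ reps] ns by (metis length_map)
    then have "h (opr (free.Quot A) f ns) = teval T \<psi> (App f (map (free.rep A) ns))"
      using h_code App_in_terms_on[OF f _ reps] ns by auto
    also have "\<dots> = opr T f (map h ns)" unfolding h_def by (simp add: comp_def)
    finally show "h (opr (free.Quot A) f ns) = opr T f (map h ns)" .
  qed
qed

text \<open>An element of \<open>\<Omega>\<^sub>A V\<close> is determined by its coordinate at the free algebra, through which
  every other coordinate factors.\<close>
lemma Omega_coord_free:
  assumes A: "finite A" and x: "x \<in> Omega F ar V A" and c: "(T, \<psi>) \<in> coords V A"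
    and s: "s \<in> terms_on F ar A" and xs: "x (free.Quot A, free_gens A) = free.code A s"
  shows "x (T, \<psi>) = teval T \<psi> s"
proof -
  obtain h where h: "is_hom F ar (free.Quot A) T h"
    and h_code: "\<And>s. s \<in> terms_on F ar A \<Longrightarrow> h (free.code A s) = teval T \<psi> s"
    using free_universal[OF c] by blast
  have "h (x (free.Quot A, free_gens A)) = x (T, \<psi>)"
    by (rule Omega_natural[OF x free_coords[OF A] c h]) (simp add: h_code Var_in_terms_on free_gens_def)
  then show ?thesis using h_code s xs by simp
qed

lemma Omega_eq_teval_gen:
  assumes A: "finite A" and x: "x \<in> Omega F ar V A"
  obtains t where "t \<in> terms_on F ar A" and "x = teval (Omega_alg F ar V A) (gen V A) t"
proof -
  obtain t where t: "t \<in> terms_on F ar A" "x (free.Quot A, free_gens A) = free.code A t"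
    using Omega_coord_in_carr[OF x free_coords[OF A]] by auto
  have "x = teval (Omega_alg F ar V A) (gen V A) t"
  proof (rule Omega_eqI[OF x])
    have "teval (Omega_alg F ar V A) (gen V A) t \<in> carr (Omega_alg F ar V A)"
      using t(1) by (intro teval_closed[OF is_alg_Omega_alg_V]) (auto simp: terms_on_def gen_in_Omega)
    then show "teval (Omega_alg F ar V A) (gen V A) t \<in> Omega F ar V A" by simp
    fix T \<psi> assume c: "(T, \<psi>) \<in> coords V A"
    then show "x (T, \<psi>) = teval (Omega_alg F ar V A) (gen V A) t (T, \<psi>)"
      using Omega_coord_free[OF A x c t] by (simp add: teval_Omega_alg_coord gen_def)
  qed
  with t(1) show ?thesis by (rule that)
qed

lemma finite_Omega:
  assumes A: "finite A"
  shows "finite (Omega F ar V A)"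
proof -
  let ?c = "(free.Quot A, free_gens A)"
  have "inj_on (\<lambda>x. x ?c) (Omega F ar V A)"
  proof (rule inj_onI)
    fix x y assume x: "x \<in> Omega F ar V A" and y: "y \<in> Omega F ar V A" and xy: "x ?c = y ?c"
    obtain s where s: "s \<in> terms_on F ar A" "x ?c = free.code A s"
      using Omega_coord_in_carr[OF x free_coords[OF A]] by auto
    show "x = y"
    proof (rule Omega_eqI[OF x y])
      fix T \<psi> assume c: "(T, \<psi>) \<in> coords V A"
      show "x (T, \<psi>) = y (T, \<psi>)"
        using Omega_coord_free[OF A x c s] Omega_coord_free[OF A y c s(1)] xy s(2) by simp
    qed
  qed
  moreover have "(\<lambda>x. x ?c) ` Omega F ar V A \<subseteq> carr (free.Quot A)"
    using Omega_coord_in_carr[OF _ free_coords[OF A]] by blast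
  moreover have "finite (carr (free.Quot A))"
    using free.Quot_in_V_of[OF locally_finite A] by (simp add: V_of_def)
  ultimately show ?thesis using finite_imageD finite_subset by blast
qed

lemma Omega_top_V_discrete: "finite A \<Longrightarrow> Omega_top F ar V A = discrete_topology (Omega F ar V A)"
  by (simp add: Omega_top_eq_discrete finite_Omega)

lemma cont_hom_OO_if_hom:
  "finite B \<Longrightarrow> finite A \<Longrightarrow> is_hom F ar (Omega_alg F ar V B) (Omega_alg F ar V A) \<phi> \<Longrightarrow>
   cont_hom_OO F ar V B A \<phi>"
  by (auto simp: cont_hom_OO_def Omega_top_V_discrete is_hom_def)

lemma cont_hom_OT_if_hom:
  "finite B \<Longrightarrow> is_hom F ar (Omega_alg F ar V B) T \<phi> \<Longrightarrow> cont_hom_OT F ar V B T \<phi>"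
  by (auto simp: cont_hom_OT_def Omega_top_V_discrete is_hom_def)

lemma hom_Omega_eqI:
  assumes B: "finite B" and x: "x \<in> Omega F ar V B"
    and h: "is_hom F ar (Omega_alg F ar V B) M h" and h': "is_hom F ar (Omega_alg F ar V B) M h'"
    and gens: "\<And>b. b \<in> B \<Longrightarrow> h (gen V B b) = h' (gen V B b)"
  shows "h x = h' x"
proof -
  obtain t where t: "t \<in> terms_on F ar B" and xt: "x = teval (Omega_alg F ar V B) (gen V B) t"
    using Omega_eq_teval_gen[OF B x] .
  have wf: "wf_trm F ar t" and vars: "\<And>v. v \<in> vars t \<Longrightarrow> gen V B v \<in> carr (Omega_alg F ar V B)"
    using t by (auto simp: terms_on_def intro!: gen_in_Omega)
  have "h x = teval M (\<lambda>v. h (gen V B v)) t"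
    using hom_teval[OF is_alg_Omega_alg_V h wf vars] xt by simp
  also have "\<dots> = teval M (\<lambda>v. h' (gen V B v)) t"
    using t gens by (intro teval_cong) (auto simp: terms_on_def)
  also have "\<dots> = h' x"
    using hom_teval[OF is_alg_Omega_alg_V h' wf vars] xt by simp
  finally show ?thesis .
qed

end

section \<open>Unary polynomials and the syntactic congruence\<close>

text \<open>The unary polynomial \<open>x \<mapsto> t(x, w\<^sub>1, w\<^sub>2, \<dots>)\<close>, with variable \<open>0\<close> as its argument.\<close>
definition upoly :: "('f, 'a) alg \<Rightarrow> (nat \<Rightarrow> 'a) \<Rightarrow> ('f, nat) trm \<Rightarrow> 'a \<Rightarrow> 'a" where
  "upoly M w t x = teval M (w(0 := x)) t"

lemma upoly_Var0 [simp]: "upoly M w (Var 0) x = x"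
  by (simp add: upoly_def)

lemma upoly_closed:
  "is_alg F ar M \<Longrightarrow> wf_trm F ar t \<Longrightarrow> \<forall>i. w i \<in> carr M \<Longrightarrow> x \<in> carr M \<Longrightarrow>
   upoly M w t x \<in> carr M"
  unfolding upoly_def by (rule teval_closed) auto

lemma upoly_comp:
  assumes "wf_trm F ar s" "wf_trm F ar t" "\<forall>i. w i \<in> carr M" "\<forall>i. w' i \<in> carr M"
  obtains r w'' where "wf_trm F ar r" "\<forall>i. w'' i \<in> carr M"
    "\<And>x. upoly M w' s (upoly M w t x) = upoly M w'' r x"
proof
  text \<open>Keep variable \<open>0\<close>, send the other variables of \<open>t\<close> to even and those of \<open>s\<close> to odd
    indices.\<close>
  define t' where "t' = tsubst (\<lambda>j. if j = 0 then Var 0 else Var (2 * j)) t"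
  define \<rho> where "\<rho> i = (if i = 0 then t' else Var (2 * i + 1))" for i :: nat
  define w'' where "w'' k = (if even k then w (k div 2) else w' (k div 2))" for k :: nat
  show "wf_trm F ar (tsubst \<rho> s)"
    using assms(1,2) by (auto simp: \<rho>_def t'_def intro!: wf_tsubst)
  show "\<forall>i. w'' i \<in> carr M" using assms(3,4) by (simp add: w''_def)
  fix x
  have "(\<lambda>j. teval M (w''(0 := x)) (if j = 0 then Var 0 else Var (2 * j))) = w(0 := x)"
    by (auto simp: w''_def)
  then have "(\<lambda>i. teval M (w''(0 := x)) (\<rho> i)) = w'(0 := upoly M w t x)"
    by (auto simp: \<rho>_def t'_def teval_tsubst upoly_def w''_def)
  then show "upoly M w' s (upoly M w t x) = upoly M w'' (tsubst \<rho> s) x"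
    by (simp add: upoly_def teval_tsubst)
qed

lemma upoly_opr:
  assumes f: "f \<in> F" and l: "length z = ar f" and k: "k < ar f" and z: "set z \<subseteq> carr M"
  obtains t w where "wf_trm F ar t" "\<forall>i. w i \<in> carr M"
    "\<And>x. upoly M w t x = opr M f (z[k := x])"
proof
  define w where "w i = (if 0 < i \<and> i \<le> ar f then z ! (i - 1) else z ! 0)" for i
  let ?t = "App f (map (\<lambda>j. if j = k then Var 0 else Var (Suc j)) [0..<ar f])"
  show "wf_trm F ar ?t" using f by auto
  show "\<forall>i. w i \<in> carr M" using z l k by (auto simp: w_def)
  fix x
  have "map (teval M (w(0 := x))) (map (\<lambda>j. if j = k then Var 0 else Var (Suc j)) [0..<ar f])
     = z[k := x]"
    using l by (intro nth_equalityI) (auto simp: w_def nth_list_update)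
  then show "upoly M w ?t x = opr M f (z[k := x])" by (simp add: upoly_def)
qed

definition synt_cong :: "'f set \<Rightarrow> ('f \<Rightarrow> nat) \<Rightarrow> ('f, 'a) alg \<Rightarrow> ('a \<times> 'a) set \<Rightarrow> ('a \<times> 'a) set" where
  "synt_cong F ar M R = {(a, b). a \<in> carr M \<and> b \<in> carr M \<and>
     (\<forall>t w c. wf_trm F ar t \<longrightarrow> (\<forall>i. w i \<in> carr M) \<longrightarrow>
        ((upoly M w t a, c) \<in> R \<longleftrightarrow> (upoly M w t b, c) \<in> R))}"

lemma synt_cong_refl: "a \<in> carr M \<Longrightarrow> (a, a) \<in> synt_cong F ar M R"
  by (simp add: synt_cong_def)

lemma synt_cong_sym: "(a, b) \<in> synt_cong F ar M R \<Longrightarrow> (b, a) \<in> synt_cong F ar M R"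
  by (auto simp: synt_cong_def)

lemma synt_cong_trans:
  "(a, b) \<in> synt_cong F ar M R \<Longrightarrow> (b, c) \<in> synt_cong F ar M R \<Longrightarrow> (a, c) \<in> synt_cong F ar M R"
  by (auto simp: synt_cong_def)

lemma synt_cong_carr: "(a, b) \<in> synt_cong F ar M R \<Longrightarrow> a \<in> carr M \<and> b \<in> carr M"
  by (simp add: synt_cong_def)

lemma synt_cong_subset:
  assumes "\<And>b. b \<in> carr M \<Longrightarrow> (b, b) \<in> R"
  shows "synt_cong F ar M R \<subseteq> R"
proof clarify
  fix a b assume ab: "(a, b) \<in> synt_cong F ar M R"
  then have b: "b \<in> carr M" and cong:
    "\<forall>t w c. wf_trm F ar t \<longrightarrow> (\<forall>i. w i \<in> carr M) \<longrightarrow>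
       ((upoly M w t a, c) \<in> R \<longleftrightarrow> (upoly M w t b, c) \<in> R)"
    by (simp_all add: synt_cong_def)
  have "(upoly M (\<lambda>_. b) (Var 0) a, b) \<in> R \<longleftrightarrow> (upoly M (\<lambda>_. b) (Var 0) b, b) \<in> R"
    using cong[rule_format, of "Var 0" "\<lambda>_. b" b] b by simp
  then show "(a, b) \<in> R" using assms b by simp
qed

lemma synt_cong_upoly:
  assumes M: "is_alg F ar M" and ab: "(a, b) \<in> synt_cong F ar M R"
    and s: "wf_trm F ar s" and w': "\<forall>i. w' i \<in> carr M"
  shows "(upoly M w' s a, upoly M w' s b) \<in> synt_cong F ar M R"
proof -
  have "(upoly M w t (upoly M w' s a), c) \<in> R \<longleftrightarrow> (upoly M w t (upoly M w' s b), c) \<in> R"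
    if t: "wf_trm F ar t" and w: "\<forall>i. w i \<in> carr M" for t w c
  proof -
    obtain r w'' where "wf_trm F ar r" "\<forall>i. w'' i \<in> carr M"
      "\<And>x. upoly M w t (upoly M w' s x) = upoly M w'' r x"
      using upoly_comp[OF t s w' w] by blast
    then show ?thesis using ab unfolding synt_cong_def by auto
  qed
  then show ?thesis
    using synt_cong_carr[OF ab] upoly_closed[OF M s w'] by (auto simp: synt_cong_def)
qed

text \<open>Replacing the arguments one at a time, each step being a unary polynomial.\<close>
lemma synt_cong_opr:
  assumes M: "is_alg F ar M" and f: "f \<in> F" and l: "length xs = ar f" "length ys = ar f"
    and xy: "\<forall>i<ar f. (xs ! i, ys ! i) \<in> synt_cong F ar M R"
  shows "(opr M f xs, opr M f ys) \<in> synt_cong F ar M R"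
proof -
  have xs: "set xs \<subseteq> carr M" and ys: "set ys \<subseteq> carr M"
    using xy l synt_cong_carr by (fastforce simp: in_set_conv_nth)+
  have "k \<le> ar f \<Longrightarrow> (opr M f xs, opr M f (take k ys @ drop k xs)) \<in> synt_cong F ar M R" for k
  proof (induction k)
    case 0
    have "opr M f xs \<in> carr M" using M f l xs unfolding is_alg_def by auto
    then show ?case by (simp add: synt_cong_refl)
  next
    case (Suc k)
    let ?z = "take k ys @ drop k xs"
    have k: "k < ar f" using Suc by simp
    have z: "length ?z = ar f" "set ?z \<subseteq> carr M" "?z ! k = xs ! k"
      using l k xs ys by (auto simp: nth_append dest: in_set_takeD in_set_dropD)
    have z': "take (Suc k) ys @ drop (Suc k) xs = ?z[k := ys ! k]"
      using l k by (intro nth_equalityI) (auto simp: nth_append nth_list_update min_def)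
    obtain t w where "wf_trm F ar t" "\<forall>i. w i \<in> carr M" "\<And>x. upoly M w t x = opr M f (?z[k := x])"
      using upoly_opr[where z="?z" and M=M and ar=ar and f=f, OF f z(1) k z(2)] by blast
    then have "(opr M f (?z[k := xs ! k]), opr M f (?z[k := ys ! k])) \<in> synt_cong F ar M R"
      using synt_cong_upoly[OF M] xy k by metis
    then have "(opr M f ?z, opr M f (take (Suc k) ys @ drop (Suc k) xs)) \<in> synt_cong F ar M R"
      using z' z(3) by (metis list_update_id)
    then show ?case using Suc synt_cong_trans by simp
  qed
  from this[of "ar f"] show ?thesis using l by simp
qed

lemma subset_synt_cong:
  assumes S: "S \<subseteq> carr M \<times> carr M" "sym S" "S \<subseteq> R" "trans R"
    and S_upoly: "\<And>a b t w. (a, b) \<in> S \<Longrightarrow> wf_trm F ar t \<Longrightarrow> \<forall>i. w i \<in> carr M \<Longrightarrow>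
      (upoly M w t a, upoly M w t b) \<in> S"
  shows "S \<subseteq> synt_cong F ar M R"
proof clarify
  fix a b assume ab: "(a, b) \<in> S"
  have "(upoly M w t a, c) \<in> R \<longleftrightarrow> (upoly M w t b, c) \<in> R"
    if "wf_trm F ar t" "\<forall>i. w i \<in> carr M" for t w c
  proof -
    have "(upoly M w t a, upoly M w t b) \<in> R" "(upoly M w t b, upoly M w t a) \<in> R"
      using S_upoly[OF ab that] S_upoly[OF symD[OF S(2) ab] that] S(3) by auto
    then show ?thesis using S(4) by (meson transD)
  qed
  then show "(a, b) \<in> synt_cong F ar M R" using ab S(1) by (auto simp: synt_cong_def)
qed

lemma mono_trancl_closure_of: "mono (\<lambda>R. S \<union> R\<^sup>+ \<union> X closure_of R)"
proof (rule monoI)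
  fix P Q :: "'a rel" assume "P \<subseteq> Q"
  then show "S \<union> P\<^sup>+ \<union> X closure_of P \<subseteq> S \<union> Q\<^sup>+ \<union> X closure_of Q"
    using trancl_mono[of _ P Q] closure_of_mono[of P Q X] by blast
qed

locale provability = lf_variety F ar \<Sigma> for F :: "'f set" and ar and \<Sigma> +
  fixes \<Gamma> :: "'f pseudoid set" and A :: "nat set"
  assumes finite_A: "finite A"
    and pseudoids: "\<forall>p\<in>\<Gamma>. is_pseudoid F ar V p"
begin

abbreviation "\<Omega> \<equiv> Omega_alg F ar V A"
abbreviation "R \<equiv> provable_rel F ar V \<Gamma> A"
abbreviation "\<theta> \<equiv> synt_cong F ar \<Omega> R"

lemma provable_rel_unfold:
  "R = Gamma0 F ar V \<Gamma> A \<union> Id_on (carr \<Omega>) \<union> R\<^sup>+ \<union>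
     (prod_topology (Omega_top F ar V A) (Omega_top F ar V A)) closure_of R"
  unfolding provable_rel_def carr_Omega_alg by (rule lfp_unfold[OF mono_trancl_closure_of])

lemma provable_refl: "a \<in> carr \<Omega> \<Longrightarrow> (a, a) \<in> R"
  using provable_rel_unfold by blast

lemma trans_provable_rel: "trans R"
proof (rule transI)
  fix a b c assume "(a, b) \<in> R" "(b, c) \<in> R"
  then have "(a, c) \<in> R\<^sup>+" by auto
  then show "(a, c) \<in> R" using provable_rel_unfold by blast
qed

lemma Gamma0_iff:
  "(a, b) \<in> Gamma0 F ar V \<Gamma> A \<longleftrightarrow>
   (\<exists>B u v \<phi> t w. ((B, u, v) \<in> \<Gamma> \<or> (B, v, u) \<in> \<Gamma>) \<and> cont_hom_OO F ar V B A \<phi> \<and>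
      wf_trm F ar t \<and> (\<forall>i. w i \<in> carr \<Omega>) \<and> a = upoly \<Omega> w t (\<phi> u) \<and> b = upoly \<Omega> w t (\<phi> v))"
  unfolding Gamma0_def upoly_def carr_Omega_alg by blast

lemma Gamma0_subset_carr: "Gamma0 F ar V \<Gamma> A \<subseteq> carr \<Omega> \<times> carr \<Omega>"
proof (rule subrelI)
  fix a b assume "(a, b) \<in> Gamma0 F ar V \<Gamma> A"
  then obtain B u v \<phi> t w where \<Gamma>: "(B, u, v) \<in> \<Gamma> \<or> (B, v, u) \<in> \<Gamma>"
    and \<phi>: "cont_hom_OO F ar V B A \<phi>" and t: "wf_trm F ar t" and w: "\<forall>i. w i \<in> carr \<Omega>"
    and ab: "a = upoly \<Omega> w t (\<phi> u)" "b = upoly \<Omega> w t (\<phi> v)"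
    unfolding Gamma0_iff by blast
  have "u \<in> Omega F ar V B" "v \<in> Omega F ar V B"
    using \<Gamma> pseudoids by (auto simp: is_pseudoid_def)
  then have "\<phi> u \<in> carr \<Omega>" "\<phi> v \<in> carr \<Omega>"
    using \<phi> by (auto simp: cont_hom_OO_def is_hom_def)
  then show "(a, b) \<in> carr \<Omega> \<times> carr \<Omega>"
    using ab upoly_closed[OF is_alg_Omega_alg_V t w] by auto
qed

lemma Gamma0_upoly:
  assumes "(a, b) \<in> Gamma0 F ar V \<Gamma> A" and s: "wf_trm F ar s" and w': "\<forall>i. w' i \<in> carr \<Omega>"
  shows "(upoly \<Omega> w' s a, upoly \<Omega> w' s b) \<in> Gamma0 F ar V \<Gamma> A"
proof -
  obtain B u v \<phi> t w where "(B, u, v) \<in> \<Gamma> \<or> (B, v, u) \<in> \<Gamma>" "cont_hom_OO F ar V B A \<phi>"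
    and t: "wf_trm F ar t" and w: "\<forall>i. w i \<in> carr \<Omega>"
    and "a = upoly \<Omega> w t (\<phi> u)" "b = upoly \<Omega> w t (\<phi> v)"
    using assms(1) unfolding Gamma0_iff by blast
  moreover obtain r w'' where "wf_trm F ar r" "\<forall>i. w'' i \<in> carr \<Omega>"
    "\<And>x. upoly \<Omega> w' s (upoly \<Omega> w t x) = upoly \<Omega> w'' r x"
    using upoly_comp[OF s t w w'] by blast
  ultimately show ?thesis unfolding Gamma0_iff by metis
qed

lemma Gamma0_subset_synt_cong: "Gamma0 F ar V \<Gamma> A \<subseteq> \<theta>"
proof (rule subset_synt_cong[OF Gamma0_subset_carr _ _ trans_provable_rel Gamma0_upoly])
  show "sym (Gamma0 F ar V \<Gamma> A)"
    by (rule symI) (unfold Gamma0_iff, blast)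
  show "Gamma0 F ar V \<Gamma> A \<subseteq> R"
    using provable_rel_unfold by blast
qed

lemma Gamma0_image:
  assumes "(B, u, v) \<in> \<Gamma>" and "cont_hom_OO F ar V B A \<phi>" and "\<phi> u \<in> carr \<Omega>"
  shows "(\<phi> u, \<phi> v) \<in> Gamma0 F ar V \<Gamma> A"
  unfolding Gamma0_iff
  by (rule exI[of _ B], rule exI[of _ u], rule exI[of _ v], rule exI[of _ \<phi>], rule exI[of _ "Var 0"],
      rule exI[of _ "\<lambda>_. \<phi> u"]) (use assms in simp)

lemma synt_cong_subset_provable: "\<theta> \<subseteq> R"
  using synt_cong_subset provable_refl by blast

section \<open>The quotient of \<open>\<Omega>\<^sub>A V\<close> by the syntactic congruence\<close>

definition term_val :: "('f, nat) trm \<Rightarrow> ('f coord \<Rightarrow> nat)" where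
  "term_val t = teval \<Omega> (gen V A) t"

lemma term_val_in_Omega:
  assumes "t \<in> terms_on F ar A"
  shows "term_val t \<in> carr \<Omega>"
  unfolding term_val_def using assms
  by (intro teval_closed[OF is_alg_Omega_alg_V]) (auto simp: terms_on_def gen_in_Omega)

lemma Omega_eq_term_val:
  assumes "x \<in> carr \<Omega>"
  obtains t where "t \<in> terms_on F ar A" and "x = term_val t"
  using Omega_eq_teval_gen[OF finite_A] assms unfolding term_val_def by auto

definition term_synt_cong :: "(('f, nat) trm \<times> ('f, nat) trm) set" where
  "term_synt_cong = {(s, t). s \<in> terms_on F ar A \<and> t \<in> terms_on F ar A \<and> (term_val s, term_val t) \<in> \<theta>}"

lemma term_val_App: "term_val (App f ts) = opr \<Omega> f (map term_val ts)"
  by (simp add: term_val_def[abs_def])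

lemma term_synt_cong_iff:
  "s \<in> terms_on F ar A \<Longrightarrow> t \<in> terms_on F ar A \<Longrightarrow>
   (s, t) \<in> term_synt_cong \<longleftrightarrow> (term_val s, term_val t) \<in> \<theta>"
  by (simp add: term_synt_cong_def)

lemma term_quotient_term_synt_cong: "term_quotient F ar A term_synt_cong \<Sigma>"
proof
  show "finite F" by (fact finite_F)
  show "\<forall>(s, t)\<in>\<Sigma>. wf_trm F ar s \<and> wf_trm F ar t" by (fact wf_\<Sigma>)
  show "equiv (terms_on F ar A) term_synt_cong"
  proof (rule equivI)
    show "term_synt_cong \<subseteq> terms_on F ar A \<times> terms_on F ar A"
      by (auto simp: term_synt_cong_def)
    show "refl_on (terms_on F ar A) term_synt_cong"
      by (rule refl_onI) (simp add: term_synt_cong_def synt_cong_refl[OF term_val_in_Omega])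
    show "sym term_synt_cong"
      by (auto simp: sym_def term_synt_cong_def intro: synt_cong_sym)
    show "trans term_synt_cong"
      by (auto simp: trans_def term_synt_cong_def intro: synt_cong_trans)
  qed
next
  fix f ss ts assume f: "f \<in> F" and l: "length ss = ar f"
    and st: "list_all2 (\<lambda>s t. (s, t) \<in> term_synt_cong) ss ts"
  have l': "length ts = ar f" using st l by (simp add: list_all2_lengthD)
  have pairs: "(ss ! i, ts ! i) \<in> term_synt_cong" if "i < ar f" for i
    using st l that by (simp add: list_all2_conv_all_nth)
  then have "ss ! i \<in> terms_on F ar A \<and> ts ! i \<in> terms_on F ar A" if "i < ar f" for i
    using that by (simp add: term_synt_cong_def)
  then have args: "set ss \<subseteq> terms_on F ar A" "set ts \<subseteq> terms_on F ar A"
    using l l' by (auto simp: in_set_conv_nth)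
  have "(opr \<Omega> f (map term_val ss), opr \<Omega> f (map term_val ts)) \<in> \<theta>"
    using pairs l l' by (intro synt_cong_opr[OF is_alg_Omega_alg_V f]) (simp_all add: term_synt_cong_def)
  then show "(App f ss, App f ts) \<in> term_synt_cong"
    using App_in_terms_on[OF f l args(1)] App_in_terms_on[OF f l' args(2)]
    by (simp add: term_synt_cong_iff term_val_App)
next
  fix s t and \<rho> :: "nat \<Rightarrow> ('f, nat) trm"
  assume st: "(s, t) \<in> \<Sigma>" and \<rho>: "\<And>v. \<rho> v \<in> terms_on F ar A"
  have "teval \<Omega> (\<lambda>v. term_val (\<rho> v)) s = teval \<Omega> (\<lambda>v. term_val (\<rho> v)) t"
    using \<rho> term_val_in_Omega by (intro satisfiesD[OF satisfies_Omega_alg_V st]) blast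
  then have "term_val (tsubst \<rho> s) = term_val (tsubst \<rho> t)"
    by (simp add: term_val_def teval_tsubst)
  moreover have "tsubst \<rho> s \<in> terms_on F ar A" "tsubst \<rho> t \<in> terms_on F ar A"
    using st wf_\<Sigma> by (auto intro!: tsubst_in_terms_on \<rho>)
  ultimately show "(tsubst \<rho> s, tsubst \<rho> t) \<in> term_synt_cong"
    using synt_cong_refl[OF term_val_in_Omega] by (simp add: term_synt_cong_def)
qed

end

sublocale provability \<subseteq> quot: term_quotient F ar A "provability.term_synt_cong F ar \<Sigma> \<Gamma> A" \<Sigma>
  by (rule term_quotient_term_synt_cong)

context provability
begin

definition quot_map :: "('f coord \<Rightarrow> nat) \<Rightarrow> nat" where
  "quot_map x = quot.code (SOME t. t \<in> terms_on F ar A \<and> x = term_val t)"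

lemma quot_map_term_val: "t \<in> terms_on F ar A \<Longrightarrow> quot_map (term_val t) = quot.code t"
proof -
  assume t: "t \<in> terms_on F ar A"
  let ?s = "SOME s. s \<in> terms_on F ar A \<and> term_val t = term_val s"
  have "\<exists>s. s \<in> terms_on F ar A \<and> term_val t = term_val s" using t by blast
  then have "?s \<in> terms_on F ar A \<and> term_val t = term_val ?s" by (rule someI_ex)
  then have s: "?s \<in> terms_on F ar A" "term_val t = term_val ?s" by auto
  then have "(?s, t) \<in> term_synt_cong"
    using t by (simp add: term_synt_cong_iff synt_cong_refl[OF term_val_in_Omega[OF t]])
  then show ?thesis unfolding quot_map_def using quot.code_eq_iff s t by auto
qed

lemma quot_map_eq_iff:
  assumes "a \<in> carr \<Omega>" and "b \<in> carr \<Omega>"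
  shows "quot_map a = quot_map b \<longleftrightarrow> (a, b) \<in> \<theta>"
proof -
  obtain s where "s \<in> terms_on F ar A" "a = term_val s"
    using assms(1) by (rule Omega_eq_term_val)
  moreover obtain t where "t \<in> terms_on F ar A" "b = term_val t"
    using assms(2) by (rule Omega_eq_term_val)
  ultimately show ?thesis using quot_map_term_val quot.code_eq_iff term_synt_cong_iff by simp
qed

lemma is_hom_quot_map: "is_hom F ar \<Omega> quot.Quot quot_map"
  unfolding is_hom_def
proof (intro conjI ballI allI impI)
  fix x assume "x \<in> carr \<Omega>"
  then obtain t where "t \<in> terms_on F ar A" "x = term_val t" by (rule Omega_eq_term_val)
  then show "quot_map x \<in> carr quot.Quot" using quot_map_term_val by auto
next
  fix f xs assume f: "f \<in> F" and xs: "length xs = ar f \<and> set xs \<subseteq> carr \<Omega>"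
  define ts where "ts = map (\<lambda>x. SOME t. t \<in> terms_on F ar A \<and> x = term_val t) xs"
  have some: "(SOME t. t \<in> terms_on F ar A \<and> x = term_val t) \<in> terms_on F ar A \<and>
      x = term_val (SOME t. t \<in> terms_on F ar A \<and> x = term_val t)" if "x \<in> set xs" for x
  proof -
    have "x \<in> carr \<Omega>" using xs that by auto
    then have "\<exists>t. t \<in> terms_on F ar A \<and> x = term_val t" by (blast elim: Omega_eq_term_val)
    then show ?thesis by (rule someI_ex)
  qed
  then have ts: "set ts \<subseteq> terms_on F ar A" "map term_val ts = xs"
    unfolding ts_def by (auto intro!: map_idI)
  have l: "length ts = ar f" using xs ts by auto
  have "quot_map (opr \<Omega> f xs) = quot.code (App f ts)"
    using ts quot_map_term_val[OF App_in_terms_on[OF f l ts(1)]]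
    by (simp add: term_val_def[abs_def])
  also have "\<dots> = opr quot.Quot f (map quot.code ts)"
    using quot.opr_Quot_code[OF f l ts(1)] by simp
  also have "map quot.code ts = map quot_map xs"
    using ts by (auto simp: quot_map_term_val subset_iff)
  finally show "quot_map (opr \<Omega> f xs) = opr quot.Quot f (map quot_map xs)" .
qed

lemma lift_along_quot_map:
  assumes "n \<in> carr quot.Quot"
  shows "term_val (quot.rep n) \<in> carr \<Omega>" and "quot_map (term_val (quot.rep n)) = n"
  using quot.rep[of n] assms term_val_in_Omega quot_map_term_val by auto

lemma Quot_holds_\<Gamma>:
  assumes p: "(B, u, v) \<in> \<Gamma>" and k: "cont_hom_OT F ar V B quot.Quot k"
  shows "k u = k v"
proof -
  have B: "finite B" and u: "u \<in> Omega F ar V B" and v: "v \<in> Omega F ar V B"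
    using p pseudoids by (auto simp: is_pseudoid_def)
  have k_hom: "is_hom F ar (Omega_alg F ar V B) quot.Quot k"
    using k by (simp add: cont_hom_OT_def)
  text \<open>Lift the images of the generators along the surjection \<open>quot_map\<close>.\<close>
  define y where "y b = term_val (quot.rep (k (gen V B b)))" for b
  have y: "y b \<in> carr \<Omega>" "quot_map (y b) = k (gen V B b)" if "b \<in> B" for b
    using k_hom gen_in_Omega[OF that, of V F ar] lift_along_quot_map unfolding y_def is_hom_def by auto
  have y_Omega: "\<And>b. b \<in> B \<Longrightarrow> y b \<in> Omega F ar V A" using y by simp
  let ?\<phi> = "Omega_subst V A B y"
  have \<phi>_hom: "is_hom F ar (Omega_alg F ar V B) \<Omega> ?\<phi>"
    using y_Omega by (rule is_hom_Omega_subst)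
  have "cont_hom_OO F ar V B A ?\<phi>"
    using B finite_A \<phi>_hom by (rule cont_hom_OO_if_hom)
  moreover have "?\<phi> u \<in> carr \<Omega>" using \<phi>_hom u by (simp add: is_hom_def)
  ultimately have "(?\<phi> u, ?\<phi> v) \<in> Gamma0 F ar V \<Gamma> A" by (rule Gamma0_image[OF p])
  then have \<phi>_uv: "(?\<phi> u, ?\<phi> v) \<in> \<theta>" by (rule subsetD[OF Gamma0_subset_synt_cong])
  then have "quot_map (?\<phi> u) = quot_map (?\<phi> v)"
    using quot_map_eq_iff synt_cong_carr[OF \<phi>_uv] by simp
  moreover have "(quot_map \<circ> ?\<phi>) x = k x" if "x \<in> Omega F ar V B" for x
  proof (rule hom_Omega_eqI[OF B that is_hom_comp[OF \<phi>_hom is_hom_quot_map] k_hom])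
    fix b assume "b \<in> B"
    then show "(quot_map \<circ> ?\<phi>) (gen V B b) = k (gen V B b)"
      using Omega_subst_gen[OF y_Omega] y by simp
  qed
  ultimately show ?thesis using u v by simp
qed

lemma Quot_in_models: "quot.Quot \<in> models F ar V \<Gamma>"
  using quot.Quot_in_V_of[OF locally_finite finite_A] Quot_holds_\<Gamma>
  by (auto simp: models_def holds_in_def)

lemma cont_hom_quot_map: "cont_hom_OT F ar V A quot.Quot quot_map"
  using finite_A is_hom_quot_map by (rule cont_hom_OT_if_hom)

end

theorem theorem5p2:
  fixes F :: "'f set" and ar :: "'f \<Rightarrow> nat"
    and \<Sigma> :: "(('f, nat) trm \<times> ('f, nat) trm) set"
  assumes "finite F"
    and "\<forall>(s, t)\<in>\<Sigma>. wf_trm F ar s \<and> wf_trm F ar t"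
    and "locally_finite F ar \<Sigma>"
  shows "strong F ar (V_of F ar \<Sigma>)"
  unfolding strong_def
proof (intro allI impI)
  fix \<Gamma> A u v
  assume \<Gamma>: "\<forall>p\<in>\<Gamma>. is_pseudoid F ar (V_of F ar \<Sigma>) p"
    and uv: "finite A \<and> u \<in> Omega F ar (V_of F ar \<Sigma>) A \<and> v \<in> Omega F ar (V_of F ar \<Sigma>) A \<and>
      (\<forall>T\<in>models F ar (V_of F ar \<Sigma>) \<Gamma>. holds_in F ar (V_of F ar \<Sigma>) T (A, u, v))"
  interpret provability F ar \<Sigma> \<Gamma> A
    using assms \<Gamma> uv by unfold_locales auto
  have "quot_map u = quot_map v"
    using uv Quot_in_models cont_hom_quot_map by (auto simp: holds_in_def)
  then have "(u, v) \<in> \<theta>" using quot_map_eq_iff[of u v] uv by simp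
  then show "(u, v) \<in> provable_rel F ar (V_of F ar \<Sigma>) \<Gamma> A"
    using synt_cong_subset_provable by blast
qed

end
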